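(* Let $M=G/\Gamma$ be a 2-step nilmanifold with invariant abelian complex structure and $\dim_{\mathbb C}\mathfrak c^{1,0}=1$; let $\bar\rho$ span $\mathfrak c^{*(0,1)}$, $W\in\mathfrak c^{1,0}$, $T\in\mathfrak t^{1,0}$ and $\Lambda_1=W\wedge T$. Suppose that $\mathrm{ad}_{\Lambda_1}\bar\rho$ is $\bar\partial$-exact in $B^{1,1}$. Then for all $p,q$, $\mathrm{ad}_{\Lambda_1}$ maps every $\bar\partial$-closed element of $B^{p,q}$ to a $\bar\partial$-exact element of $B^{p+1,q}$; i.e. $\mathrm{ad}_{\Lambda_1}$ induces the zero map $H^q(\mathfrak g^{p,0})\to H^q(\mathfrak g^{p+1,0})$.
   Context: $G$ is a simply connected nilpotent Lie group with Lie algebra $\mathfrak g$, $\Gamma$ a lattice, 2-step: $[\mathfrak g,\mathfrak g]\subseteq\mathfrak c$ (center). $J$ is a left-invariant abelian complex structure ($J^2=-1$, $[JA,JB]=[A,B]$), so $\mathfrak g^{1,0}$ is abelian. $\mathfrak g^{1,0}=\mathfrak t^{1,0}\oplus\mathfrak c^{1,0}$ with $\mathfrak c^{1,0}$ the $(1,0)$-part of the center, basis $W_\ell$, and $\mathfrak t^{1,0}$ with basis $T_k$, such that the only nonzero brackets are $[\bar T_k,T_j]=\sum_\ell E^\ell_{kj}W_\ell-\sum_\ell\bar E^\ell_{jk}\bar W_\ell$; dual basis $\omega^k,\rho^\ell$ with $d\omega^k=0$, $d\rho^\ell=\sum E^\ell_{ji}\omega^i\wedge\bar\omega^j$; $\mathfrak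 t^{*(0,1)}=\mathrm{span}\{\bar\omega^k\}$, $\mathfrak c^{*(0,1)}=\mathrm{span}\{\bar\rho^\ell\}$. $B^{p,q}=\wedge^p\mathfrak g^{1,0}\otimes\wedge^q\mathfrak g^{*(0,1)}$ with $\bar\partial:B^{p,q}\to B^{p,q+1}$ the Lie algebroid (Dolbeault) differential (on $(0,q)$-forms the $(0,q+1)$-part of $d$; for $V\in\mathfrak g^{1,0}$, $(\bar\partial V)(\bar X)$ is the $(1,0)$-part of $[\bar X,V]$; extended as graded derivation) and the Schouten bracket (graded extension of the Lie bracket on $\mathfrak g^{1,0}$, $[V,\bar\omega]=\iota_Vd\bar\omega$, $[\bar\omega_1,\bar\omega_2]=0$); $\mathrm{ad}_A=[A,\cdot]$. $H^q(\mathfrak g^{p,0})$ is the $\bar\partial$-cohomology of $B^{p,\bullet}$ in degree $q$. *)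

theory Defs
  imports Complex_Main
begin

text \<open>
Coordinate model.  g^{1,0} has basis V_0,...,V_n with V_k = T_k (k < n) and
V_n = W (so dim c^{1,0} = 1); g^{*(0,1)} has the dual conjugate basis
phibar^0,...,phibar^n with phibar^k = conj omega^k (k < n), phibar^n = conj rho.
The structure constants are E k j = E^1_{kj} (k, j < n).

The bigraded algebra B = (+)_{p,q} B^{p,q} is the exterior (supercommutative)
algebra on the 2(n+1) odd generators; generator V_i is encoded by the number i
(i <= n) and generator phibar^k by the number n+1+k.  A basis monomial is the
finite set S of its generators, written in increasing order; an element of B is
a coefficient function on such sets.
\<close>

type_synonym belt = "nat set \<Rightarrow> complex"

definition gens :: "nat \<Rightarrow> nat set" where
  "gens n = {..<2 * Suc n}"

definition vidx :: "nat \<Rightarrow> nat \<Rightarrow> nat" where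
  "vidx n i = i"

definition fidx :: "nat \<Rightarrow> nat \<Rightarrow> nat" where
  "fidx n k = Suc n + k"

definition bas :: "nat set \<Rightarrow> belt" where
  "bas S = (\<lambda>U. if U = S then 1 else 0)"

definition zeroB :: belt where "zeroB = (\<lambda>U. 0)"

definition addB :: "belt \<Rightarrow> belt \<Rightarrow> belt" where
  "addB f g = (\<lambda>U. f U + g U)"

definition smultB :: "complex \<Rightarrow> belt \<Rightarrow> belt" where
  "smultB c f = (\<lambda>U. c * f U)"

text \<open>Sign of e_S \<and> e_T: number of pairs (s,t), s in S, t in T, with t < s.\<close>
definition ninv :: "nat set \<Rightarrow> nat set \<Rightarrow> nat" where
  "ninv S T = card {(s, t). s \<in> S \<and> t \<in> T \<and> t < s}"

definition wedge :: "nat \<Rightarrow> belt \<Rightarrow> belt \<Rightarrow> belt" where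
  "wedge n f g = (\<lambda>U. \<Sum>S\<in>Pow (gens n). \<Sum>T\<in>Pow (gens n).
      if S \<inter> T = {} \<and> S \<union> T = U then (-1) ^ ninv S T * f S * g T else 0)"

text \<open>Extension of an odd (total degree +1) graded derivation D, given on the
generators by D s (an even element), to all of B:
D(x_{s_1} ... x_{s_k}) = \<Sum>_i (-1)^{i-1} x_{s_1}..D(x_{s_i})..x_{s_k}.\<close>
definition dext :: "nat \<Rightarrow> (nat \<Rightarrow> belt) \<Rightarrow> belt \<Rightarrow> belt" where
  "dext n D f = (\<lambda>U. \<Sum>S\<in>Pow (gens n). f S *
      (\<Sum>s\<in>S. (-1) ^ card {t \<in> S. t < s} * wedge n (D s) (bas (S - {s})) U))"

text \<open>Bracket data of g_C (abelian J, 2-step):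
[conj V_k, V_j] = \<Sum>_l acoef l k j V_l + \<Sum>_l bcoef l k j conj V_l, i.e.
[conj T_k, T_j] = E_{kj} W - conj(E_{jk}) conj W, all other brackets of basis
vectors of g^{1,0} + g^{0,1} zero.\<close>
definition acoef :: "nat \<Rightarrow> (nat \<Rightarrow> nat \<Rightarrow> complex) \<Rightarrow> nat \<Rightarrow> nat \<Rightarrow> nat \<Rightarrow> complex" where
  "acoef n E l k j = (if l = n \<and> k < n \<and> j < n then E k j else 0)"

definition bcoef :: "nat \<Rightarrow> (nat \<Rightarrow> nat \<Rightarrow> complex) \<Rightarrow> nat \<Rightarrow> nat \<Rightarrow> nat \<Rightarrow> complex" where
  "bcoef n E l k j = (if l = n \<and> k < n \<and> j < n then - cnj (E j k) else 0)"

definition vecB :: "nat \<Rightarrow> (nat \<Rightarrow> complex) \<Rightarrow> belt" where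
  "vecB n X = (\<lambda>U. \<Sum>j\<le>n. X j * bas {vidx n j} U)"

definition formB :: "nat \<Rightarrow> (nat \<Rightarrow> complex) \<Rightarrow> belt" where
  "formB n c = (\<lambda>U. \<Sum>k\<le>n. c k * bas {fidx n k} U)"

text \<open>dbar on generators.
(dbar V_j)(conj X) = (1,0)-part of [conj X, V_j], so
dbar V_j = \<Sum>_{k,l} acoef l k j V_l \<otimes> phibar^k.
dbar phibar^l = (0,2)-part of d phibar^l, where d phi (X,Y) = - phi([X,Y]);
since [g^{0,1}, g^{0,1}] = 0 (J abelian) this (0,2)-part vanishes.\<close>
definition dbar_gen :: "nat \<Rightarrow> (nat \<Rightarrow> nat \<Rightarrow> complex) \<Rightarrow> nat \<Rightarrow> belt" where
  "dbar_gen n E s = (if s \<le> n then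
      (\<lambda>U. \<Sum>k\<le>n. \<Sum>l\<le>n. acoef n E l k s *
             wedge n (bas {vidx n l}) (bas {fidx n k}) U)
    else zeroB)"

definition dbar :: "nat \<Rightarrow> (nat \<Rightarrow> nat \<Rightarrow> complex) \<Rightarrow> belt \<Rightarrow> belt" where
  "dbar n E = dext n (dbar_gen n E)"

text \<open>Schouten bracket [X, phibar^l] = iota_X d phibar^l for X in g^{1,0}
(coefficient vector X); one computes
iota_{V_j} d phibar^l = \<Sum>_k bcoef l k j phibar^k.\<close>
definition brVF :: "nat \<Rightarrow> (nat \<Rightarrow> nat \<Rightarrow> complex) \<Rightarrow> (nat \<Rightarrow> complex) \<Rightarrow> nat \<Rightarrow> belt" where
  "brVF n E X l = formB n (\<lambda>k. \<Sum>j\<le>n. X j * bcoef n E l k j)"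

text \<open>ad_{X \<and> Y} on generators: [X\<and>Y, x] = X \<and> [Y,x] + [X,x] \<and> Y
(Gerstenhaber sign conventions); [X,V] = 0 since g^{1,0} is abelian.\<close>
definition ad_gen :: "nat \<Rightarrow> (nat \<Rightarrow> nat \<Rightarrow> complex) \<Rightarrow> (nat \<Rightarrow> complex) \<Rightarrow> (nat \<Rightarrow> complex)
    \<Rightarrow> nat \<Rightarrow> belt" where
  "ad_gen n E X Y s = (if s \<le> n then zeroB else
      addB (wedge n (vecB n X) (brVF n E Y (s - Suc n)))
           (wedge n (brVF n E X (s - Suc n)) (vecB n Y)))"

text \<open>ad_{X\<and>Y} = [X \<and> Y, -], a derivation of total degree +1 (|X\<and>Y| - 1 = 1).\<close>
definition adL :: "nat \<Rightarrow> (nat \<Rightarrow> nat \<Rightarrow> complex) \<Rightarrow> (nat \<Rightarrow> complex) \<Rightarrow> (nat \<Rightarrow> complex)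
    \<Rightarrow> belt \<Rightarrow> belt" where
  "adL n E X Y = dext n (ad_gen n E X Y)"

definition inB :: "nat \<Rightarrow> nat \<Rightarrow> nat \<Rightarrow> belt \<Rightarrow> bool" where
  "inB n p q f \<longleftrightarrow> (\<forall>U. f U \<noteq> 0 \<longrightarrow>
      U \<subseteq> gens n \<and> card (U \<inter> {..n}) = p \<and> card (U - {..n}) = q)"

definition dbar_closed :: "nat \<Rightarrow> (nat \<Rightarrow> nat \<Rightarrow> complex) \<Rightarrow> nat \<Rightarrow> nat \<Rightarrow> belt \<Rightarrow> bool" where
  "dbar_closed n E p q f \<longleftrightarrow> inB n p q f \<and> dbar n E f = zeroB"

definition dbar_exact :: "nat \<Rightarrow> (nat \<Rightarrow> nat \<Rightarrow> complex) \<Rightarrow> nat \<Rightarrow> nat \<Rightarrow> belt \<Rightarrow> bool" where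
  "dbar_exact n E p q f \<longleftrightarrow> inB n p q f \<and>
      ((q = 0 \<and> f = zeroB) \<or> (0 < q \<and> (\<exists>g. inB n p (q - 1) g \<and> dbar n E g = f)))"

text \<open>The real Lie algebra g, identified with complex coordinate vectors z
(X = \<Sum>_i z_i V_i + conj), has bracket [z,u] = lbr(z,u) W + conj, where
lbr(z,u) = \<Sum>_{i,j<n} E_{ij} (conj z_i u_j - conj u_i z_j).\<close>
definition lbr :: "nat \<Rightarrow> (nat \<Rightarrow> nat \<Rightarrow> complex) \<Rightarrow> (nat \<Rightarrow> complex) \<Rightarrow> (nat \<Rightarrow> complex) \<Rightarrow> complex" where
  "lbr n E z u = (\<Sum>i<n. \<Sum>j<n. E i j * (cnj (z i) * u j - cnj (u i) * z j))"

definition realbr :: "nat \<Rightarrow> (nat \<Rightarrow> nat \<Rightarrow> complex) \<Rightarrow> (nat \<Rightarrow> complex) \<Rightarrow> (nat \<Rightarrow> complex) \<Rightarrow> (nat \<Rightarrow> complex)" where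
  "realbr n E z u = (\<lambda>j. if j = n then lbr n E z u else 0)"

text \<open>Existence of a lattice (Malcev): g has a real basis b_0..b_{2n+1}
with rational structure constants.\<close>
definition has_lattice :: "nat \<Rightarrow> (nat \<Rightarrow> nat \<Rightarrow> complex) \<Rightarrow> bool" where
  "has_lattice n E \<longleftrightarrow> (\<exists>b :: nat \<Rightarrow> nat \<Rightarrow> complex.
     (\<forall>r :: nat \<Rightarrow> real. (\<forall>j\<le>n. (\<Sum>a<2 * Suc n. of_real (r a) * b a j) = 0)
         \<longrightarrow> (\<forall>a<2 * Suc n. r a = 0)) \<and>
     (\<forall>a<2 * Suc n. \<forall>c<2 * Suc n. \<exists>q :: nat \<Rightarrow> real. (\<forall>m. q m \<in> \<rat>) \<and>
         (\<forall>j\<le>n. realbr n E (b a) (b c) j = (\<Sum>m<2 * Suc n. of_real (q m) * b m j))))"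

text \<open>The (1,0)-part of the centre is exactly span W: a real element z of g is
central only if its t-components vanish.\<close>
definition centre_is_W :: "nat \<Rightarrow> (nat \<Rightarrow> nat \<Rightarrow> complex) \<Rightarrow> bool" where
  "centre_is_W n E \<longleftrightarrow> (\<forall>z. (\<forall>u. lbr n E z u = 0) \<longrightarrow> (\<forall>k<n. z k = 0))"

end

theory Submission
  imports Defs
begin

text \<open>
Because \<open>g\<^sup>1\<^sup>,\<^sup>0\<close> is abelian and only the Schouten brackets of \<open>W\<close> and \<open>T\<close> with rhobar can be
nonzero, the derivation \<open>ad\<^sub>\<Lambda>\<^sub>1\<close> moves no generator except rhobar. Writing
\<open>f = h \<and> rhobar + (terms free of rhobar)\<close> therefore gives \<open>ad\<^sub>\<Lambda>\<^sub>1 f = \<plusminus>G \<and> h\<close> with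
\<open>G = ad\<^sub>\<Lambda>\<^sub>1 rhobar\<close>. Since dbar neither creates nor destroys rhobar, \<open>dbar f = 0\<close> forces
\<open>dbar h = 0\<close>. If \<open>r G = dbar g\<close> with \<open>g\<close> a vector, the Leibniz rule yields
\<open>dbar (g \<and> h) = r G \<and> h\<close>, hence \<open>ad\<^sub>\<Lambda>\<^sub>1 f = \<plusminus>dbar (g \<and> h) / r\<close>.
\<close>

abbreviation rho_gen :: "nat \<Rightarrow> nat" where  \<comment> \<open>rhobar = phibar^n, the largest generator\<close>
  "rho_gen n \<equiv> Suc n + n"

definition supported :: "nat \<Rightarrow> belt \<Rightarrow> bool" where
  "supported n f \<longleftrightarrow> (\<forall>U. f U \<noteq> 0 \<longrightarrow> U \<subseteq> gens n)"

definition lincomb :: "'i set \<Rightarrow> ('i \<Rightarrow> complex) \<Rightarrow> ('i \<Rightarrow> belt) \<Rightarrow> belt" where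
  "lincomb I c x = (\<lambda>U. \<Sum>i\<in>I. c i * x i U)"

lemma finite_gens [simp]: "finite (gens n)"
  by (simp add: gens_def)

lemma rho_gen_in_gens: "rho_gen n \<in> gens n"
  by (simp add: gens_def)

lemma le_rho_gen: "S \<subseteq> gens n \<Longrightarrow> t \<in> S \<Longrightarrow> t \<le> rho_gen n"
  by (auto simp: gens_def)

lemma addB_apply: "addB f g U = f U + g U"
  by (simp add: addB_def)

lemma smultB_apply: "smultB c f U = c * f U"
  by (simp add: smultB_def)

lemma zeroB_apply: "zeroB U = 0"
  by (simp add: zeroB_def)

lemma smultB_smultB: "smultB c (smultB d f) = smultB (c * d) f"
  unfolding smultB_def by (rule ext) simp

lemma smultB_zeroB [simp]: "smultB c zeroB = zeroB"
  unfolding smultB_def zeroB_def by simp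

lemma addB_zeroB_right [simp]: "addB f zeroB = f"
  unfolding addB_def zeroB_def by simp

lemma if_then_sum_else_zero: "(if C then sum f I else (0::complex)) = (\<Sum>i\<in>I. if C then f i else 0)"
  by simp

lemma lincomb_cong: "(\<And>i. i \<in> I \<Longrightarrow> c i \<noteq> 0 \<Longrightarrow> x i = y i) \<Longrightarrow> lincomb I c x = lincomb I c y"
  unfolding lincomb_def by (rule ext, rule sum.cong) (auto, metis mult_zero_left)

lemma lincomb_addB: "lincomb I c (\<lambda>i. addB (x i) (y i)) = addB (lincomb I c x) (lincomb I c y)"
  unfolding lincomb_def addB_def by (rule ext) (simp add: distrib_left sum.distrib)

lemma lincomb_smultB: "lincomb I c (\<lambda>i. smultB k (x i)) = smultB k (lincomb I c x)"
  unfolding lincomb_def smultB_def by (rule ext) (simp add: sum_distrib_left algebra_simps)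

lemma lincomb_bas_expansion:
  assumes "supported n f"
  shows "f = lincomb (Pow (gens n)) f bas"
proof (rule ext)
  fix U
  have "lincomb (Pow (gens n)) f bas U = (\<Sum>S\<in>Pow (gens n). if U = S then f S else 0)"
    unfolding lincomb_def bas_def by (intro sum.cong refl) auto
  also have "\<dots> = f U"
    using assms unfolding supported_def by (auto simp: sum.delta)
  finally show "f U = lincomb (Pow (gens n)) f bas U" by simp
qed

lemma wedge_lincomb_left: "wedge n (lincomb I c x) y = lincomb I c (\<lambda>i. wedge n (x i) y)"
  unfolding wedge_def lincomb_def
  by (rule ext) (simp add: sum_distrib_left sum_distrib_right if_then_sum_else_zero mult_ac
      if_distrib sum.swap[of _ I] cong: if_cong)

lemma wedge_lincomb_right: "wedge n y (lincomb I c x) = lincomb I c (\<lambda>i. wedge n y (x i))"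
  unfolding wedge_def lincomb_def
  by (rule ext) (simp add: sum_distrib_left sum_distrib_right if_then_sum_else_zero mult_ac
      if_distrib sum.swap[of _ I] cong: if_cong)

lemma wedge_expand_left:
  assumes "supported n f"
  shows "wedge n f g = lincomb (Pow (gens n)) f (\<lambda>S. wedge n (bas S) g)"
proof -
  have "wedge n f g = wedge n (lincomb (Pow (gens n)) f bas) g"
    using arg_cong[where f = "\<lambda>h. wedge n h g", OF lincomb_bas_expansion[OF assms]] .
  then show ?thesis
    by (simp only: wedge_lincomb_left)
qed

lemma wedge_expand_right:
  assumes "supported n g"
  shows "wedge n f g = lincomb (Pow (gens n)) g (\<lambda>S. wedge n f (bas S))"
proof -
  have "wedge n f g = wedge n f (lincomb (Pow (gens n)) g bas)"
    using arg_cong[where f = "\<lambda>h. wedge n f h", OF lincomb_bas_expansion[OF assms]] .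
  then show ?thesis
    by (simp only: wedge_lincomb_right)
qed

lemma dext_lincomb: "dext n D (lincomb I c x) = lincomb I c (\<lambda>i. dext n D (x i))"
  unfolding dext_def lincomb_def
  by (rule ext) (simp add: sum_distrib_left sum_distrib_right mult.assoc mult.left_commute
      sum.swap[of _ I])

lemma wedge_smultB_left: "wedge n (smultB c f) g = smultB c (wedge n f g)"
  unfolding wedge_def smultB_def
  by (rule ext) (simp add: sum_distrib_left if_distrib algebra_simps cong: if_cong)

lemma wedge_smultB_right: "wedge n f (smultB c g) = smultB c (wedge n f g)"
  unfolding wedge_def smultB_def
  by (rule ext) (simp add: sum_distrib_left if_distrib algebra_simps cong: if_cong)

lemma wedge_zeroB_left [simp]: "wedge n zeroB f = zeroB"
  unfolding wedge_def zeroB_def by (rule ext) (simp cong: if_cong)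

lemma wedge_zeroB_right [simp]: "wedge n f zeroB = zeroB"
  unfolding wedge_def zeroB_def by (rule ext) (simp cong: if_cong)

lemma dext_zeroB [simp]: "dext n D zeroB = zeroB"
  unfolding dext_def zeroB_def by simp

lemma dext_smultB: "dext n D (smultB c f) = smultB c (dext n D f)"
  unfolding dext_def smultB_def by (rule ext) (simp add: sum_distrib_left algebra_simps)

lemma supported_wedge: "supported n (wedge n f g)"
  unfolding supported_def
proof (intro allI impI)
  fix U
  assume "wedge n f g U \<noteq> 0"
  then obtain S where S: "S \<in> Pow (gens n)" and nz:
    "(\<Sum>T\<in>Pow (gens n). if S \<inter> T = {} \<and> S \<union> T = U then (-1) ^ ninv S T * f S * g T else 0) \<noteq> 0"
    unfolding wedge_def by (rule sum.not_neutral_contains_not_neutral)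
  from nz obtain T where T: "T \<in> Pow (gens n)" and
    "(if S \<inter> T = {} \<and> S \<union> T = U then (-1) ^ ninv S T * f S * g T else 0) \<noteq> (0::complex)"
    by (rule sum.not_neutral_contains_not_neutral)
  then show "U \<subseteq> gens n"
    using S T by (auto split: if_splits)
qed

lemma supported_addB: "supported n f \<Longrightarrow> supported n g \<Longrightarrow> supported n (addB f g)"
  unfolding supported_def addB_def by (metis add.right_neutral)

lemma finite_pairs: "finite A \<Longrightarrow> finite B \<Longrightarrow> finite {(s, t). s \<in> A \<and> t \<in> B \<and> P s t}"
  by (rule finite_subset[of _ "A \<times> B"]) auto

lemma ninv_union_right:
  assumes "finite A" "finite B" "finite C" "B \<inter> C = {}"
  shows "ninv A (B \<union> C) = ninv A B + ninv A C"
proof -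
  have "{(s, t). s \<in> A \<and> t \<in> B \<union> C \<and> t < s} =
        {(s, t). s \<in> A \<and> t \<in> B \<and> t < s} \<union> {(s, t). s \<in> A \<and> t \<in> C \<and> t < s}" by auto
  moreover have "card (\<dots>) = ninv A B + ninv A C"
    unfolding ninv_def using assms by (intro card_Un_disjoint finite_pairs) auto
  ultimately show ?thesis unfolding ninv_def by simp
qed

lemma ninv_singleton_left: "ninv {x} T = card {t \<in> T. t < x}"
proof -
  have "{(s, t). s \<in> {x} \<and> t \<in> T \<and> t < s} = (\<lambda>t. (x, t)) ` {t \<in> T. t < x}" by auto
  moreover have "inj_on (\<lambda>t. (x, t)) {t \<in> T. t < x}" by (auto simp: inj_on_def)
  ultimately show ?thesis unfolding ninv_def by (simp add: card_image)
qed

lemma ninv_singleton_right: "ninv T {x} = card {t \<in> T. x < t}"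
proof -
  have "{(s, t). s \<in> T \<and> t \<in> {x} \<and> t < s} = (\<lambda>t. (t, x)) ` {t \<in> T. x < t}" by auto
  moreover have "inj_on (\<lambda>t. (t, x)) {t \<in> T. x < t}" by (auto simp: inj_on_def)
  ultimately show ?thesis unfolding ninv_def by (simp add: card_image)
qed

lemma ninv_singleton_swap:
  assumes "finite B" "x \<notin> B"
  shows "ninv {x} B + ninv B {x} = card B"
proof -
  have "{t \<in> B. t < x} \<union> {t \<in> B. x < t} = B"
    using assms by (auto simp: not_less order.order_iff_strict)
  moreover have "card ({t \<in> B. t < x} \<union> {t \<in> B. x < t}) = card {t \<in> B. t < x} + card {t \<in> B. x < t}"
    using assms by (intro card_Un_disjoint) auto
  ultimately show ?thesis by (simp add: ninv_singleton_left ninv_singleton_right)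
qed

lemma wedge_bas_apply:
  assumes "A \<subseteq> gens n" "B \<subseteq> gens n"
  shows "wedge n (bas A) (bas B) U = (if A \<inter> B = {} \<and> A \<union> B = U then (-1) ^ ninv A B else 0)"
proof -
  have "wedge n (bas A) (bas B) U = (\<Sum>S\<in>Pow (gens n). \<Sum>T\<in>Pow (gens n). if T = B then
      (if S = A then (if A \<inter> B = {} \<and> A \<union> B = U then (-1) ^ ninv A B else 0) else 0) else 0)"
    unfolding wedge_def bas_def by (intro sum.cong refl) auto
  also have "\<dots> = (if A \<inter> B = {} \<and> A \<union> B = U then (-1) ^ ninv A B else 0)"
    using assms by (simp add: sum.delta)
  finally show ?thesis .
qed

lemma wedge_bas:
  assumes "A \<subseteq> gens n" "B \<subseteq> gens n"
  shows "wedge n (bas A) (bas B) =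
    (if A \<inter> B = {} then smultB ((-1) ^ ninv A B) (bas (A \<union> B)) else zeroB)"
  unfolding smultB_def zeroB_def
  by (rule ext, subst wedge_bas_apply[OF assms]) (auto simp: bas_def)

lemma wedge_bas_empty_right:
  assumes "supported n f"
  shows "wedge n f (bas {}) = f"
proof -
  have "wedge n f (bas {}) = lincomb (Pow (gens n)) f (\<lambda>A. wedge n (bas A) (bas {}))"
    by (subst lincomb_bas_expansion[OF assms]) (simp add: wedge_lincomb_left)
  also have "\<dots> = lincomb (Pow (gens n)) f bas"
    by (intro lincomb_cong) (simp add: wedge_bas smultB_def ninv_def)
  finally show ?thesis
    using lincomb_bas_expansion[OF assms] by simp
qed

lemma dext_bas:
  assumes "S \<subseteq> gens n"
  shows "dext n D (bas S) =
    lincomb S (\<lambda>s. (-1) ^ card {t \<in> S. t < s}) (\<lambda>s. wedge n (D s) (bas (S - {s})))"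
proof (rule ext)
  fix U
  have "dext n D (bas S) U = (\<Sum>S'\<in>Pow (gens n). if S' = S then
      (\<Sum>s\<in>S. (-1) ^ card {t \<in> S. t < s} * wedge n (D s) (bas (S - {s})) U) else 0)"
    unfolding dext_def by (intro sum.cong refl) (auto simp: bas_def)
  then show "dext n D (bas S) U =
      lincomb S (\<lambda>s. (-1) ^ card {t \<in> S. t < s}) (\<lambda>s. wedge n (D s) (bas (S - {s}))) U"
    using assms by (simp add: sum.delta lincomb_def)
qed

lemma dext_eq_sum_bas: "dext n D f U = (\<Sum>S\<in>Pow (gens n). f S * dext n D (bas S) U)"
  unfolding dext_def[of n D f] by (intro sum.cong refl) (simp add: dext_bas lincomb_def)

lemma dext_singleton:
  assumes "x \<in> gens n" "supported n (D x)"
  shows "dext n D (bas {x}) = D x"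
proof -
  have "{t. t = x \<and> t < x} = {}" by auto
  then have "dext n D (bas {x}) = wedge n (D x) (bas {})"
    using assms by (simp add: dext_bas lincomb_def del: Collect_empty_eq)
  then show ?thesis
    using assms by (simp add: wedge_bas_empty_right)
qed

section \<open>The Leibniz rule for odd derivations\<close>

definition even_supported :: "nat \<Rightarrow> belt \<Rightarrow> bool" where
  "even_supported n F \<longleftrightarrow> (\<forall>U. F U \<noteq> 0 \<longrightarrow> U \<subseteq> gens n \<and> even (card U))"

lemma even_supported_imp_supported: "even_supported n F \<Longrightarrow> supported n F"
  unfolding even_supported_def supported_def by auto

lemma minus_one_power_eq_of_even_add: "even (a + b) \<Longrightarrow> (-1::complex) ^ a = (-1) ^ b"
  by (auto simp: minus_one_power_iff)

lemma wedge_singleton_commute_even_bas: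
  assumes "B \<subseteq> gens n" "R \<subseteq> gens n" "x \<in> gens n" "even (card B)"
  shows "wedge n (bas {x}) (wedge n (bas B) (bas R)) = wedge n (bas B) (wedge n (bas {x}) (bas R))"
proof (cases "B \<inter> R = {} \<and> x \<notin> B \<and> x \<notin> R")
  case True
  have fin: "finite B" "finite R"
    using assms finite_subset[OF _ finite_gens] by auto
  have "ninv {x} (B \<union> R) = ninv {x} B + ninv {x} R"
    using True fin by (intro ninv_union_right) auto
  moreover have "ninv B (insert x R) = ninv B {x} + ninv B R"
    using True fin ninv_union_right[of B "{x}" R] by auto
  moreover have "ninv {x} B + ninv B {x} = card B"
    using True fin ninv_singleton_swap by auto
  ultimately have "(-1::complex) ^ (ninv B R + ninv {x} (B \<union> R)) =
      (-1) ^ (ninv {x} R + ninv B (insert x R))"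
    using assms(4) by (intro minus_one_power_eq_of_even_add) presburger
  then show ?thesis
    using True assms by (simp add: wedge_bas wedge_smultB_right smultB_smultB power_add Un_left_commute)
next
  case False
  then show ?thesis
    using assms by (auto simp: wedge_bas wedge_smultB_right)
qed

lemma wedge_singleton_commute_even:
  assumes "even_supported n F" "R \<subseteq> gens n" "x \<in> gens n"
  shows "wedge n (bas {x}) (wedge n F (bas R)) = wedge n F (wedge n (bas {x}) (bas R))"
proof -
  have F: "F = lincomb (Pow (gens n)) F bas"
    using lincomb_bas_expansion even_supported_imp_supported assms(1) by blast
  have "wedge n (bas {x}) (wedge n F (bas R)) =
      lincomb (Pow (gens n)) F (\<lambda>B. wedge n (bas {x}) (wedge n (bas B) (bas R)))"
    by (subst F) (simp add: wedge_lincomb_left wedge_lincomb_right)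
  also have "\<dots> = lincomb (Pow (gens n)) F (\<lambda>B. wedge n (bas B) (wedge n (bas {x}) (bas R)))"
    using assms unfolding even_supported_def by (intro lincomb_cong wedge_singleton_commute_even_bas) auto
  also have "\<dots> = wedge n F (wedge n (bas {x}) (bas R))"
    by (subst (2) F) (simp add: wedge_lincomb_left)
  finally show ?thesis .
qed

lemma wedge_singleton_dext_bas:
  assumes D: "\<And>s. even_supported n (D s)" and "x \<in> gens n" "T \<subseteq> gens n"
  shows "wedge n (bas {x}) (dext n D (bas T)) = lincomb T (\<lambda>s. (-1) ^ card {t \<in> T. t < s})
      (\<lambda>s. wedge n (D s) (wedge n (bas {x}) (bas (T - {s}))))"
  using assms by (simp add: dext_bas wedge_lincomb_right, intro lincomb_cong wedge_singleton_commute_even) auto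

lemma wedge_singleton_dext_bas_mem:
  assumes D: "\<And>s. even_supported n (D s)" and x: "x \<in> T" and T: "T \<subseteq> gens n"
  shows "wedge n (bas {x}) (dext n D (bas T)) = wedge n (D x) (bas T)"
proof -
  let ?c = "\<lambda>s. (-1::complex) ^ card {t \<in> T. t < s}"
  have fin: "finite T"
    using finite_subset[OF T finite_gens] .
  have "wedge n (D s) (wedge n (bas {x}) (bas (T - {s}))) =
      (if s = x then smultB (?c x) (wedge n (D x) (bas T)) else zeroB)" if "s \<in> T" for s
  proof (cases "s = x")
    case True
    have "{x} \<union> (T - {x}) = T" "{t \<in> T - {x}. t < x} = {t \<in> T. t < x}"
      using x by auto
    then have "wedge n (bas {x}) (bas (T - {x})) = smultB (?c x) (bas T)"
      using x T by (simp add: wedge_bas ninv_singleton_left subset_iff)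
    then show ?thesis
      using True by (simp add: wedge_smultB_right)
  next
    case False
    then have "wedge n (bas {x}) (bas (T - {s})) = zeroB"
      using x T by (subst wedge_bas) auto
    then show ?thesis
      using False by simp
  qed
  then have "wedge n (bas {x}) (dext n D (bas T)) =
      lincomb T ?c (\<lambda>s. if s = x then smultB (?c x) (wedge n (D x) (bas T)) else zeroB)"
    using x T D by (simp add: wedge_singleton_dext_bas[OF D _ T] subset_iff cong: lincomb_cong)
  also have "\<dots> = wedge n (D x) (bas T)"
  proof (rule ext)
    fix U
    have "lincomb T ?c (\<lambda>s. if s = x then smultB (?c x) (wedge n (D x) (bas T)) else zeroB) U =
        (\<Sum>s\<in>T. if s = x then ?c x * (?c x * wedge n (D x) (bas T) U) else 0)"
      unfolding lincomb_def by (intro sum.cong refl) (simp add: smultB_apply zeroB_apply)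
    then show "lincomb T ?c (\<lambda>s. if s = x then smultB (?c x) (wedge n (D x) (bas T)) else zeroB) U =
        wedge n (D x) (bas T) U"
      using x fin by (simp add: sum.delta flip: mult.assoc power_add)
  qed
  finally show ?thesis .
qed

lemma sign_insert_reorder:
  fixes x s :: nat and T :: "nat set"
  assumes "finite T" "x \<notin> T" "s \<in> T"
  shows "(-1::complex) ^ card {t \<in> T. t < x} * (-1) ^ card {t \<in> insert x T. t < s} =
         - ((-1) ^ card {t \<in> T. t < s} * (-1) ^ card {t \<in> T - {s}. t < x})"
proof (cases "x < s")
  case True
  have "{t \<in> insert x T. t < s} = insert x {t \<in> T. t < s}"
    using True by auto
  then have "card {t \<in> insert x T. t < s} = Suc (card {t \<in> T. t < s})"
    using assms by simp
  moreover have "{t \<in> T. t < x} = {t \<in> T - {s}. t < x}"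
    using True less_trans[of s x s] by auto
  ultimately show ?thesis by simp
next
  case False
  then have sx: "s < x"
    using assms by (cases "s = x") auto
  have "{t \<in> insert x T. t < s} = {t \<in> T. t < s}"
    using sx by auto
  moreover have "{t \<in> T. t < x} = insert s {t \<in> T - {s}. t < x}"
    using sx assms by auto
  then have "card {t \<in> T. t < x} = Suc (card {t \<in> T - {s}. t < x})"
    using assms by simp
  ultimately show ?thesis by simp
qed

lemma dext_wedge_singleton_bas_notin:
  assumes D: "\<And>s. even_supported n (D s)" and x: "x \<in> gens n" "x \<notin> T" and T: "T \<subseteq> gens n"
  shows "dext n D (wedge n (bas {x}) (bas T)) =
         addB (wedge n (D x) (bas T)) (smultB (-1) (wedge n (bas {x}) (dext n D (bas T))))"
proof (rule ext)
  fix U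
  let ?c = "\<lambda>s. (-1::complex) ^ card {t \<in> T. t < s}"
  let ?c' = "\<lambda>s. (-1::complex) ^ card {t \<in> insert x T. t < s}"
  let ?w = "\<lambda>s. wedge n (D s) (bas (insert x T - {s})) U"
  have fin: "finite T"
    using finite_subset[OF T finite_gens] .
  have x_first: "{t \<in> insert x T. t < x} = {t \<in> T. t < x}" "insert x T - {x} = T"
    using x by auto
  have "dext n D (wedge n (bas {x}) (bas T)) U = ?c x * (?c' x * ?w x + (\<Sum>s\<in>T. ?c' s * ?w s))"
    using x T fin x_first
    by (simp add: wedge_bas ninv_singleton_left dext_smultB dext_bas smultB_apply lincomb_def)
  moreover have "?c x * ?c' x = 1"
    using x_first(1) by (simp flip: power_add)
  moreover have "wedge n (bas {x}) (bas (T - {s})) =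
      smultB ((-1) ^ card {t \<in> T - {s}. t < x}) (bas (insert x T - {s}))" if "s \<in> T" for s
  proof -
    have "insert x T - {s} = {x} \<union> (T - {s})"
      using that x by auto
    then show ?thesis
      using x T by (simp add: wedge_bas ninv_singleton_left subset_iff)
  qed
  then have "wedge n (bas {x}) (dext n D (bas T)) U =
      (\<Sum>s\<in>T. ?c s * ((-1) ^ card {t \<in> T - {s}. t < x} * ?w s))"
    unfolding wedge_singleton_dext_bas[OF D x(1) T] lincomb_def
    by (intro sum.cong refl) (simp add: wedge_smultB_right smultB_apply)
  moreover have "?c x * (\<Sum>s\<in>T. ?c' s * ?w s) =
      - (\<Sum>s\<in>T. ?c s * ((-1) ^ card {t \<in> T - {s}. t < x} * ?w s))"
    using sign_insert_reorder[OF fin x(2)]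
    by (simp add: sum_distrib_left sum_negf flip: mult.assoc)
  ultimately show "dext n D (wedge n (bas {x}) (bas T)) U =
      addB (wedge n (D x) (bas T)) (smultB (-1) (wedge n (bas {x}) (dext n D (bas T)))) U"
    using x_first(2) by (simp add: addB_apply smultB_apply distrib_left flip: mult.assoc)
qed

lemma dext_wedge_singleton_bas:
  assumes D: "\<And>s. even_supported n (D s)" and x: "x \<in> gens n" and T: "T \<subseteq> gens n"
  shows "dext n D (wedge n (bas {x}) (bas T)) =
         addB (wedge n (D x) (bas T)) (smultB (-1) (wedge n (bas {x}) (dext n D (bas T))))"
proof (cases "x \<in> T")
  case True
  then have "wedge n (bas {x}) (bas T) = zeroB"
    using x T by (simp add: wedge_bas)
  with True show ?thesis
    by (intro ext) (simp add: wedge_singleton_dext_bas_mem[OF D True T] addB_apply smultB_apply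
        zeroB_apply)
qed (rule dext_wedge_singleton_bas_notin[OF D x _ T])

lemma dext_wedge_singleton:
  assumes D: "\<And>s. even_supported n (D s)" and x: "x \<in> gens n" and h: "supported n h"
  shows "dext n D (wedge n (bas {x}) h) =
         addB (wedge n (D x) h) (smultB (-1) (wedge n (bas {x}) (dext n D h)))"
proof -
  let ?P = "Pow (gens n)"
  note H = lincomb_bas_expansion[OF h]
  have "dext n D (wedge n (bas {x}) h) = lincomb ?P h (\<lambda>T. dext n D (wedge n (bas {x}) (bas T)))"
    by (subst H) (simp add: wedge_lincomb_right dext_lincomb)
  also have "\<dots> = lincomb ?P h (\<lambda>T. addB (wedge n (D x) (bas T))
      (smultB (-1) (wedge n (bas {x}) (dext n D (bas T)))))"
    by (rule lincomb_cong) (simp add: dext_wedge_singleton_bas[OF D x])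
  also have "\<dots> = addB (wedge n (D x) (lincomb ?P h bas))
      (smultB (-1) (wedge n (bas {x}) (dext n D (lincomb ?P h bas))))"
    by (simp add: lincomb_addB lincomb_smultB wedge_lincomb_right dext_lincomb)
  finally show ?thesis
    using H by simp
qed

lemma dext_wedge_degree_one:
  assumes D: "\<And>s. even_supported n (D s)" and g: "\<And>A. g A \<noteq> 0 \<Longrightarrow> \<exists>x\<in>gens n. A = {x}"
    and h: "supported n h"
  shows "dext n D (wedge n g h) = addB (wedge n (dext n D g) h) (smultB (-1) (wedge n g (dext n D h)))"
proof -
  let ?P = "Pow (gens n)"
  have "supported n g"
    using g by (force simp: supported_def)
  note G = lincomb_bas_expansion[OF this]
  have "dext n D (wedge n g h) = lincomb ?P g (\<lambda>A. dext n D (wedge n (bas A) h))"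
    by (subst G) (simp add: wedge_lincomb_left dext_lincomb)
  also have "\<dots> = lincomb ?P g (\<lambda>A. addB (wedge n (dext n D (bas A)) h)
      (smultB (-1) (wedge n (bas A) (dext n D h))))"
    by (rule lincomb_cong)
      (use g dext_wedge_singleton[OF D _ h] dext_singleton even_supported_imp_supported[OF D] in fastforce)
  also have "\<dots> = addB (wedge n (dext n D (lincomb ?P g bas)) h)
      (smultB (-1) (wedge n (lincomb ?P g bas) (dext n D h)))"
    by (simp add: lincomb_addB lincomb_smultB wedge_lincomb_left dext_lincomb)
  finally show ?thesis
    using G by simp
qed

section \<open>Elements free of rhobar\<close>

definition rho_free :: "nat \<Rightarrow> belt \<Rightarrow> bool" where
  "rho_free n f \<longleftrightarrow> (\<forall>U. f U \<noteq> 0 \<longrightarrow> U \<subseteq> gens n \<and> rho_gen n \<notin> U)"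

text \<open>As rhobar is the largest generator, \<open>f = cofactor n f \<and> rhobar + (terms free of rhobar)\<close>
without any sign.\<close>

definition cofactor :: "nat \<Rightarrow> belt \<Rightarrow> belt" where
  "cofactor n f = (\<lambda>U. if U \<subseteq> gens n \<and> rho_gen n \<notin> U then f (insert (rho_gen n) U) else 0)"

lemma rho_free_imp_supported: "rho_free n f \<Longrightarrow> supported n f"
  unfolding rho_free_def supported_def by auto

lemma rho_free_bas: "S \<subseteq> gens n \<Longrightarrow> rho_gen n \<notin> S \<Longrightarrow> rho_free n (bas S)"
  unfolding rho_free_def bas_def by auto

lemma rho_free_cofactor: "rho_free n (cofactor n f)"
  unfolding rho_free_def cofactor_def by auto

lemma cofactor_zeroB [simp]: "cofactor n zeroB = zeroB"
  unfolding cofactor_def zeroB_def by auto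

lemma rho_free_wedge:
  assumes "rho_free n f" "rho_free n g"
  shows "rho_free n (wedge n f g)"
  unfolding rho_free_def
proof (intro allI impI)
  fix U
  assume "wedge n f g U \<noteq> 0"
  then obtain S where nz:
    "(\<Sum>T\<in>Pow (gens n). if S \<inter> T = {} \<and> S \<union> T = U then (-1) ^ ninv S T * f S * g T else 0) \<noteq> 0"
    unfolding wedge_def by (rule sum.not_neutral_contains_not_neutral)
  then obtain T where
    "(if S \<inter> T = {} \<and> S \<union> T = U then (-1) ^ ninv S T * f S * g T else 0) \<noteq> (0::complex)"
    by (rule sum.not_neutral_contains_not_neutral)
  then show "U \<subseteq> gens n \<and> rho_gen n \<notin> U"
    using assms unfolding rho_free_def by (auto split: if_splits)
qed

lemma rho_free_dext:
  assumes D: "\<And>s. rho_free n (D s)" and f: "rho_free n f"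
  shows "rho_free n (dext n D f)"
  unfolding rho_free_def
proof (intro allI impI)
  fix U
  assume "dext n D f U \<noteq> 0"
  then obtain S where "S \<in> Pow (gens n)" and nz: "f S * dext n D (bas S) U \<noteq> 0"
    unfolding dext_eq_sum_bas[of n D f] by (rule sum.not_neutral_contains_not_neutral)
  then have S: "S \<subseteq> gens n" "rho_gen n \<notin> S"
    using f unfolding rho_free_def by auto
  from nz have "dext n D (bas S) U \<noteq> 0"
    by simp
  then obtain s where "s \<in> S" and
    "(-1) ^ card {t \<in> S. t < s} * wedge n (D s) (bas (S - {s})) U \<noteq> 0"
    unfolding dext_bas[OF S(1)] lincomb_def by (rule sum.not_neutral_contains_not_neutral)
  moreover have "rho_free n (wedge n (D s) (bas (S - {s})))"
    using S by (intro rho_free_wedge D rho_free_bas) auto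
  ultimately show "U \<subseteq> gens n \<and> rho_gen n \<notin> U"
    unfolding rho_free_def by auto
qed

lemma wedge_bas_insert_rho:
  assumes F: "rho_free n F" and R: "R \<subseteq> gens n" "rho_gen n \<notin> R" and V: "rho_gen n \<notin> V"
  shows "wedge n F (bas (insert (rho_gen n) R)) (insert (rho_gen n) V) = wedge n F (bas R) V"
proof -
  let ?P = "rho_gen n"
  have wedge_apply: "wedge n F (bas X) U = (\<Sum>B\<in>Pow (gens n).
      F B * (if B \<inter> X = {} \<and> B \<union> X = U then (-1) ^ ninv B X else 0))" if "X \<subseteq> gens n" for X U
    using that by (simp add: wedge_expand_left[OF rho_free_imp_supported[OF F]] lincomb_def wedge_bas_apply)
  show ?thesis
    unfolding wedge_apply[OF R(1)] wedge_apply[OF insert_subsetI[OF rho_gen_in_gens R(1)]]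
  proof (intro sum.cong refl)
    fix B
    assume B: "B \<in> Pow (gens n)"
    show "F B * (if B \<inter> insert ?P R = {} \<and> B \<union> insert ?P R = insert ?P V
          then (-1) ^ ninv B (insert ?P R) else 0) =
        F B * (if B \<inter> R = {} \<and> B \<union> R = V then (-1) ^ ninv B R else 0)"
    proof (cases "F B = 0")
      case False
      then have PB: "?P \<notin> B"
        using F unfolding rho_free_def by blast
      have fin: "finite B" "finite R"
        using B R finite_subset[OF _ finite_gens] by auto
      have "{t \<in> B. ?P < t} = {}"
        using le_rho_gen[of B n] B by force
      then have "ninv B (insert ?P R) = ninv B R"
        using ninv_union_right[of B "{?P}" R] fin R by (auto simp: ninv_singleton_right)
      moreover have "(B \<inter> insert ?P R = {} \<and> B \<union> insert ?P R = insert ?P V) \<longleftrightarrow>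
          (B \<inter> R = {} \<and> B \<union> R = V)"
        using PB R(2) V by blast
      ultimately show ?thesis by simp
    qed simp
  qed
qed

lemma dext_bas_insert_rho:
  assumes D: "\<And>s. rho_free n (D s)" "D (rho_gen n) = zeroB"
    and T: "T \<subseteq> gens n" "rho_gen n \<notin> T" and U: "rho_gen n \<notin> U"
  shows "dext n D (bas (insert (rho_gen n) T)) (insert (rho_gen n) U) = dext n D (bas T) U"
proof -
  let ?P = "rho_gen n"
  have fin: "finite T"
    using finite_subset[OF T(1) finite_gens] .
  have "dext n D (bas (insert ?P T)) (insert ?P U) = (\<Sum>s\<in>T. (-1) ^ card {t \<in> insert ?P T. t < s} *
      wedge n (D s) (bas (insert ?P T - {s})) (insert ?P U))"
    using fin T D(2) rho_gen_in_gens[of n]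
    by (simp add: dext_bas lincomb_def zeroB_apply)
  also have "\<dots> = (\<Sum>s\<in>T. (-1) ^ card {t \<in> T. t < s} * wedge n (D s) (bas (T - {s})) U)"
  proof (intro sum.cong refl)
    fix s
    assume s: "s \<in> T"
    have "{t \<in> insert ?P T. t < s} = {t \<in> T. t < s}"
      using le_rho_gen[OF T(1) s] by auto
    moreover have "insert ?P T - {s} = insert ?P (T - {s})"
      using s T(2) by auto
    moreover have "wedge n (D s) (bas (insert ?P (T - {s}))) (insert ?P U) =
        wedge n (D s) (bas (T - {s})) U"
      using T U by (intro wedge_bas_insert_rho D) auto
    ultimately show "(-1) ^ card {t \<in> insert ?P T. t < s} * wedge n (D s) (bas (insert ?P T - {s}))
        (insert ?P U) = (-1) ^ card {t \<in> T. t < s} * wedge n (D s) (bas (T - {s})) U"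
      by simp
  qed
  also have "\<dots> = dext n D (bas T) U"
    by (simp add: dext_bas[OF T(1)] lincomb_def)
  finally show ?thesis .
qed

lemma sum_Pow_insert:
  assumes "P \<in> gens n"
  shows "(\<Sum>S\<in>Pow (gens n). if P \<in> S then F S else 0) =
    (\<Sum>T\<in>Pow (gens n). if P \<notin> T then F (insert P T) else (0::complex))"
proof -
  have "(\<Sum>S\<in>Pow (gens n). if P \<in> S then F S else 0) = (\<Sum>S\<in>{S \<in> Pow (gens n). P \<in> S}. F S)"
    by (rule sum.inter_filter[symmetric]) simp
  also have "\<dots> = (\<Sum>T\<in>{T \<in> Pow (gens n). P \<notin> T}. F (insert P T))"
    by (rule sum.reindex_bij_witness[of _ "insert P" "\<lambda>S. S - {P}"])
      (use assms in \<open>auto simp: insert_absorb\<close>)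
  also have "\<dots> = (\<Sum>T\<in>Pow (gens n). if P \<notin> T then F (insert P T) else 0)"
    by (rule sum.inter_filter) simp
  finally show ?thesis .
qed

lemma dext_cofactor:
  assumes D: "\<And>s. rho_free n (D s)" "D (rho_gen n) = zeroB"
  shows "cofactor n (dext n D f) = dext n D (cofactor n f)"
proof (rule ext)
  fix U
  let ?P = "rho_gen n"
  show "cofactor n (dext n D f) U = dext n D (cofactor n f) U"
  proof (cases "U \<subseteq> gens n \<and> ?P \<notin> U")
    case True
    have "cofactor n (dext n D f) U = (\<Sum>S\<in>Pow (gens n). f S * dext n D (bas S) (insert ?P U))"
      using True by (simp add: cofactor_def dext_eq_sum_bas[of n D f])
    also have "\<dots> = (\<Sum>S\<in>Pow (gens n). if ?P \<in> S then f S * dext n D (bas S) (insert ?P U) else 0)"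
    proof (intro sum.cong refl)
      fix S
      assume "S \<in> Pow (gens n)"
      then have "?P \<notin> S \<Longrightarrow> rho_free n (dext n D (bas S))"
        by (intro rho_free_dext[OF D(1)] rho_free_bas) auto
      then show "f S * dext n D (bas S) (insert ?P U) =
          (if ?P \<in> S then f S * dext n D (bas S) (insert ?P U) else 0)"
        unfolding rho_free_def by auto
    qed
    also have "\<dots> = (\<Sum>T\<in>Pow (gens n). if ?P \<notin> T
        then f (insert ?P T) * dext n D (bas (insert ?P T)) (insert ?P U) else 0)"
      by (rule sum_Pow_insert[OF rho_gen_in_gens])
    also have "\<dots> = (\<Sum>T\<in>Pow (gens n). cofactor n f T * dext n D (bas T) U)"
      using True D dext_bas_insert_rho[of n D] by (intro sum.cong refl) (simp add: cofactor_def)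
    also have "\<dots> = dext n D (cofactor n f) U"
      by (simp add: dext_eq_sum_bas[of n D "cofactor n f"])
    finally show ?thesis .
  next
    case False
    then have "cofactor n (dext n D f) U = 0"
      unfolding cofactor_def by auto
    moreover have "rho_free n (dext n D (cofactor n f))"
      by (rule rho_free_dext[OF D(1) rho_free_cofactor])
    ultimately show ?thesis
      using False unfolding rho_free_def by auto
  qed
qed

lemma inB_imp_supported: "inB n p q f \<Longrightarrow> supported n f"
  unfolding inB_def supported_def by auto

lemma inB_zeroB: "inB n p q zeroB"
  unfolding inB_def zeroB_def by simp

lemma inB_smultB: "inB n p q f \<Longrightarrow> inB n p q (smultB c f)"
  unfolding inB_def smultB_def by auto

lemma card_of_inB:
  assumes "inB n p q f" "f U \<noteq> 0"
  shows "card U = p + q"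
  using assms card_Int_Diff[of U "{..n}"] finite_subset[OF _ finite_gens] unfolding inB_def by auto

lemma singleton_of_inB_1_0:
  assumes "inB n 1 0 g" "g A \<noteq> 0"
  shows "\<exists>x\<in>gens n. A = {x}"
proof -
  have "A \<subseteq> gens n" "card A = 1"
    using assms card_of_inB[OF assms] unfolding inB_def by auto
  moreover obtain x where "A = {x}"
    using \<open>card A = 1\<close> by (rule card_1_singletonE)
  ultimately show ?thesis
    by auto
qed

lemma inB_wedge:
  assumes f: "inB n p q f" and g: "inB n p' q' g"
  shows "inB n (p + p') (q + q') (wedge n f g)"
  unfolding inB_def
proof (intro allI impI)
  fix U
  assume "wedge n f g U \<noteq> 0"
  then obtain S where S: "S \<in> Pow (gens n)" and nz:
    "(\<Sum>T\<in>Pow (gens n). if S \<inter> T = {} \<and> S \<union> T = U then (-1) ^ ninv S T * f S * g T else 0) \<noteq> 0"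
    unfolding wedge_def by (rule sum.not_neutral_contains_not_neutral)
  from nz obtain T where T: "T \<in> Pow (gens n)" and
    "(if S \<inter> T = {} \<and> S \<union> T = U then (-1) ^ ninv S T * f S * g T else 0) \<noteq> (0::complex)"
    by (rule sum.not_neutral_contains_not_neutral)
  then have ST: "S \<inter> T = {}" "S \<union> T = U" "f S \<noteq> 0" "g T \<noteq> 0"
    by (auto split: if_splits)
  have fin: "finite S" "finite T"
    using S T finite_subset[OF _ finite_gens] by auto
  have "card ((S \<inter> {..n}) \<union> (T \<inter> {..n})) = card (S \<inter> {..n}) + card (T \<inter> {..n})"
    "card ((S - {..n}) \<union> (T - {..n})) = card (S - {..n}) + card (T - {..n})"
    using fin ST(1) by (auto intro!: card_Un_disjoint)
  moreover have "U \<inter> {..n} = (S \<inter> {..n}) \<union> (T \<inter> {..n})" "U - {..n} = (S - {..n}) \<union> (T - {..n})"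
    using ST by auto
  ultimately show "U \<subseteq> gens n \<and> card (U \<inter> {..n}) = p + p' \<and> card (U - {..n}) = q + q'"
    using f g ST S T unfolding inB_def by auto
qed

lemma inB_cofactor:
  assumes "inB n p q f"
  shows "inB n p (q - 1) (cofactor n f)"
  unfolding inB_def
proof (intro allI impI)
  fix T
  assume "cofactor n f T \<noteq> 0"
  then have T: "T \<subseteq> gens n" "rho_gen n \<notin> T" and f_nz: "f (insert (rho_gen n) T) \<noteq> 0"
    by (auto simp: cofactor_def split: if_splits)
  have "card (insert (rho_gen n) T \<inter> {..n}) = p" "card (insert (rho_gen n) T - {..n}) = q"
    using assms f_nz unfolding inB_def by blast+
  moreover have "insert (rho_gen n) T \<inter> {..n} = T \<inter> {..n}"
    "insert (rho_gen n) T - {..n} = insert (rho_gen n) (T - {..n})"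
    by auto
  moreover have "finite (T - {..n})"
    using finite_subset[OF T(1) finite_gens] by simp
  ultimately show "T \<subseteq> gens n \<and> card (T \<inter> {..n}) = p \<and> card (T - {..n}) = q - 1"
    using T by simp
qed

lemma cofactor_of_inB_0:
  assumes "inB n p 0 f"
  shows "cofactor n f = zeroB"
proof (rule ext)
  fix U
  have "f (insert (rho_gen n) U) = 0"
  proof (rule ccontr)
    assume "f (insert (rho_gen n) U) \<noteq> 0"
    then have sub: "insert (rho_gen n) U \<subseteq> gens n" and "card (insert (rho_gen n) U - {..n}) = 0"
      using assms unfolding inB_def by blast+
    moreover have "finite (insert (rho_gen n) U - {..n})"
      using sub finite_subset[OF _ finite_gens] by blast
    ultimately have "insert (rho_gen n) U - {..n} = {}"
      by simp
    then show False
      by simp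
  qed
  then show "cofactor n f U = zeroB U"
    by (simp add: cofactor_def zeroB_apply)
qed

section \<open>Derivations moving only rhobar\<close>

lemma dext_bas_rho_only:
  assumes D: "\<And>s. s \<in> gens n \<Longrightarrow> s \<noteq> rho_gen n \<Longrightarrow> D s = zeroB" and S: "S \<subseteq> gens n"
  shows "dext n D (bas S) U = (if rho_gen n \<in> S then
      (-1) ^ card (S - {rho_gen n}) * wedge n (D (rho_gen n)) (bas (S - {rho_gen n})) U else 0)"
proof -
  let ?P = "rho_gen n"
  have "dext n D (bas S) U = (\<Sum>s\<in>S. if s = ?P then
      (-1) ^ card {t \<in> S. t < s} * wedge n (D s) (bas (S - {s})) U else 0)"
    unfolding dext_bas[OF S] lincomb_def
    by (intro sum.cong refl) (use D S in \<open>auto simp: zeroB_apply\<close>)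
  moreover have "{t \<in> S. t < ?P} = S - {?P}"
    using le_rho_gen[OF S] by force
  ultimately show ?thesis
    using finite_subset[OF S finite_gens] by (simp add: sum.delta)
qed

lemma dext_rho_only_eq_wedge_cofactor:
  assumes D: "\<And>s. s \<in> gens n \<Longrightarrow> s \<noteq> rho_gen n \<Longrightarrow> D s = zeroB" and f: "inB n p q f"
  shows "dext n D f = smultB ((-1) ^ (p + q - 1)) (wedge n (D (rho_gen n)) (cofactor n f))"
proof (rule ext)
  fix U
  let ?P = "rho_gen n" and ?\<sigma> = "(-1::complex) ^ (p + q - 1)"
  let ?w = "\<lambda>T. wedge n (D ?P) (bas T) U"
  have "dext n D f U = (\<Sum>S\<in>Pow (gens n). if ?P \<in> S then
      f S * ((-1) ^ card (S - {?P}) * ?w (S - {?P})) else 0)"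
    unfolding dext_eq_sum_bas[of n D f]
    by (intro sum.cong refl) (simp add: dext_bas_rho_only[OF D])
  also have "\<dots> = (\<Sum>T\<in>Pow (gens n). if ?P \<notin> T then
      f (insert ?P T) * ((-1) ^ card (insert ?P T - {?P}) * ?w (insert ?P T - {?P})) else 0)"
    by (rule sum_Pow_insert[OF rho_gen_in_gens])
  also have "\<dots> = (\<Sum>T\<in>Pow (gens n). ?\<sigma> * (cofactor n f T * ?w T))"
  proof (intro sum.cong refl)
    fix T
    assume T: "T \<in> Pow (gens n)"
    show "(if ?P \<notin> T then f (insert ?P T) * ((-1) ^ card (insert ?P T - {?P}) *
        ?w (insert ?P T - {?P})) else 0) = ?\<sigma> * (cofactor n f T * ?w T)"
    proof (cases "cofactor n f T = 0")
      case False
      have "q \<noteq> 0"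
      proof
        assume "q = 0"
        with f have "cofactor n f = zeroB"
          by (simp add: cofactor_of_inB_0)
        with False show False
          by (simp add: zeroB_apply)
      qed
      moreover have "?P \<notin> T" "card T = p + (q - 1)"
        using False card_of_inB[OF inB_cofactor[OF f]] by (auto simp: cofactor_def split: if_splits)
      ultimately show ?thesis
        using T by (simp add: cofactor_def)
    qed (use T in \<open>auto simp: cofactor_def\<close>)
  qed
  also have "\<dots> = smultB ?\<sigma> (wedge n (D ?P) (cofactor n f)) U"
    by (simp add: wedge_expand_right[OF rho_free_imp_supported[OF rho_free_cofactor]] lincomb_def
        smultB_apply sum_distrib_left mult_ac)
  finally show "dext n D f U = smultB ?\<sigma> (wedge n (D ?P) (cofactor n f)) U" .
qed

lemma dbar_gen_support:
  assumes "dbar_gen n E s U \<noteq> 0"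
  shows "\<exists>k<n. U = {n, Suc n + k}"
proof -
  have "s \<le> n"
    using assms by (auto simp: dbar_gen_def zeroB_def split: if_splits)
  then obtain k l where "k \<le> n" "l \<le> n"
    and nz: "acoef n E l k s * wedge n (bas {vidx n l}) (bas {fidx n k}) U \<noteq> 0"
    using assms unfolding dbar_gen_def
    by (auto elim!: sum.not_neutral_contains_not_neutral)
  then have lk: "l = n" "k < n"
    by (auto simp: acoef_def split: if_splits)
  then have "{l} \<subseteq> gens n" "{Suc n + k} \<subseteq> gens n"
    by (auto simp: gens_def)
  then have "U = {l} \<union> {Suc n + k}"
    using nz wedge_bas_apply[of "{l}" n "{Suc n + k}" U]
    by (auto simp: vidx_def fidx_def split: if_splits)
  then show ?thesis
    using lk by auto
qed

lemma even_supported_dbar_gen: "even_supported n (dbar_gen n E s)"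
  unfolding even_supported_def
  by (auto dest!: dbar_gen_support simp: gens_def)

lemma rho_free_dbar_gen: "rho_free n (dbar_gen n E s)"
  unfolding rho_free_def
  by (auto dest!: dbar_gen_support simp: gens_def)

lemma dbar_gen_rho: "dbar_gen n E (rho_gen n) = zeroB"
  by (simp add: dbar_gen_def)

lemma dbar_smultB: "dbar n E (smultB c f) = smultB c (dbar n E f)"
  by (simp add: dbar_def dext_smultB)

lemma dbar_cofactor: "cofactor n (dbar n E f) = dbar n E (cofactor n f)"
  unfolding dbar_def by (rule dext_cofactor[where D = "dbar_gen n E", OF rho_free_dbar_gen dbar_gen_rho])

lemma dbar_wedge_degree_one:
  assumes "inB n 1 0 g" "supported n h"
  shows "dbar n E (wedge n g h) =
    addB (wedge n (dbar n E g) h) (smultB (-1) (wedge n g (dbar n E h)))"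
  unfolding dbar_def
  by (rule dext_wedge_degree_one[OF even_supported_dbar_gen singleton_of_inB_1_0[OF assms(1)] assms(2)])

lemma ad_gen_eq_zeroB:
  assumes "s \<in> gens n" "s \<noteq> rho_gen n"
  shows "ad_gen n E X Y s = zeroB"
proof (cases "s \<le> n")
  case False
  then have "s - Suc n \<noteq> n"
    using assms by (auto simp: gens_def)
  then have "brVF n E Z (s - Suc n) = zeroB" for Z
    unfolding brVF_def formB_def zeroB_def by (simp add: bcoef_def)
  then show ?thesis
    using False by (simp add: ad_gen_def)
qed (simp add: ad_gen_def)

lemma supported_ad_gen: "supported n (ad_gen n E X Y s)"
proof (cases "s \<le> n")
  case False
  then show ?thesis
    by (simp add: ad_gen_def supported_addB supported_wedge)
qed (simp add: ad_gen_def supported_def zeroB_def)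

lemma adL_eq_wedge_cofactor:
  assumes "inB n p q f"
  shows "adL n E X Y f =
    smultB ((-1) ^ (p + q - 1)) (wedge n (ad_gen n E X Y (rho_gen n)) (cofactor n f))"
  unfolding adL_def by (rule dext_rho_only_eq_wedge_cofactor[OF ad_gen_eq_zeroB assms])

lemma adL_smultB: "adL n E X Y (smultB c f) = smultB c (adL n E X Y f)"
  by (simp add: adL_def dext_smultB)

lemma adL_bas_rho: "adL n E X Y (bas {rho_gen n}) = ad_gen n E X Y (rho_gen n)"
  unfolding adL_def by (rule dext_singleton[OF rho_gen_in_gens supported_ad_gen])

lemma adL_of_inB_0: "inB n p 0 f \<Longrightarrow> adL n E X Y f = zeroB"
  by (simp add: adL_eq_wedge_cofactor cofactor_of_inB_0)

lemma inB_adL: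
  assumes G: "inB n 1 1 (ad_gen n E X Y (rho_gen n))" and f: "inB n p q f"
  shows "inB n (p + 1) q (adL n E X Y f)"
proof (cases "q = 0")
  case True
  then show ?thesis
    using f by (simp add: adL_of_inB_0 inB_zeroB)
next
  case False
  then show ?thesis
    using inB_smultB[OF inB_wedge[OF G inB_cofactor[OF f]]] by (simp add: adL_eq_wedge_cofactor[OF f])
qed

lemma adL_eq_dbar_wedge_cofactor:
  assumes g: "inB n 1 0 g" "dbar n E g = smultB r (ad_gen n E X Y (rho_gen n))" and "r \<noteq> 0"
    and f: "dbar_closed n E p q f"
  shows "adL n E X Y f = dbar n E (smultB ((-1) ^ (p + q - 1) / r) (wedge n g (cofactor n f)))"
proof -
  from f have fB: "inB n p q f" and "dbar n E f = zeroB"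
    by (simp_all add: dbar_closed_def)
  then have "inB n p (q - 1) (cofactor n f)" "dbar n E (cofactor n f) = zeroB"
    using inB_cofactor dbar_cofactor[of n E f] by simp_all
  then show ?thesis
    using dbar_wedge_degree_one[OF g(1) inB_imp_supported] g(2) \<open>r \<noteq> 0\<close>
    by (simp add: dbar_smultB wedge_smultB_left smultB_smultB adL_eq_wedge_cofactor[OF fB])
qed

theorem mainTheorem9:
  fixes n :: nat and E :: "nat \<Rightarrow> nat \<Rightarrow> complex"
    and w r :: complex and t :: "nat \<Rightarrow> complex"
  assumes lattice: "has_lattice n E"
    and two_step: "\<exists>k<n. \<exists>j<n. E k j \<noteq> 0"
    and centre: "centre_is_W n E"
    and r_nz: "r \<noteq> 0"
    and hyp: "dbar_exact n E 1 1
                (adL n E (\<lambda>j. if j = n then w else 0) (\<lambda>j. if j < n then t j else 0)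
                   (smultB r (bas {fidx n n})))"
  shows "\<forall>p q f. dbar_closed n E p q f \<longrightarrow>
           dbar_exact n E (p + 1) q
             (adL n E (\<lambda>j. if j = n then w else 0) (\<lambda>j. if j < n then t j else 0) f)"
proof (intro allI impI)
  fix p q f
  assume closed: "dbar_closed n E p q f"
  then have f: "inB n p q f"
    by (simp add: dbar_closed_def)
  let ?X = "\<lambda>j. if j = n then w else 0" and ?Y = "\<lambda>j. if j < n then t j else 0"
  let ?G = "ad_gen n E ?X ?Y (rho_gen n)"
  have "adL n E ?X ?Y (smultB r (bas {fidx n n})) = smultB r ?G"
    by (simp only: fidx_def adL_smultB adL_bas_rho)
  with hyp obtain g where g: "inB n 1 0 g" "dbar n E g = smultB r ?G" and "inB n 1 1 (smultB r ?G)"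
    unfolding dbar_exact_def by auto
  then have "inB n 1 1 ?G"
    using inB_smultB[of n 1 1 "smultB r ?G" "1 / r"] r_nz by (simp add: smultB_smultB smultB_def)
  then have ad_f: "inB n (p + 1) q (adL n E ?X ?Y f)"
    by (rule inB_adL[OF _ f])
  show "dbar_exact n E (p + 1) q (adL n E ?X ?Y f)"
  proof (cases "q = 0")
    case True
    with ad_f f show ?thesis
      by (simp add: dbar_exact_def adL_of_inB_0)
  next
    case False
    have "inB n (p + 1) (q - 1) (smultB ((-1) ^ (p + q - 1) / r) (wedge n g (cofactor n f)))"
      using inB_smultB[OF inB_wedge[OF g(1) inB_cofactor[OF f]]] by simp
    with False ad_f show ?thesis
      unfolding dbar_exact_def adL_eq_dbar_wedge_cofactor[OF g r_nz closed] by blast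
  qed
qed

end
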